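(* In the setting of the quantum deformed-oscillator realization ($\mathcal A$, $f\mapsto f(N)$, $b$, $b^\dagger$, $\Phi$, and $\mathbf A,\mathbf B,\mathbf C$ built from functions $A,h,\rho:\mathbb Z\to\mathbb C$), assume for all $n\in\mathbb Z$ conditions (q1) $(\Delta A(n))^2=\delta+\beta(A(n)+A(n+1))$, (q2) $\sum_{i=1}^{L+1}\alpha_iA(n)^i+\delta h(n)+\epsilon+2\beta A(n)h(n)=0$, (q3) $\Delta A(n)-\Delta A(n+1)=-\beta$, and (q4) $\Delta A(n)(h(n+1)-h(n))=-\beta(h(n+1)+h(n))+\sum_{i=1}^{L}\omega_i(A(n+1)^i+A(n)^i)+\eta$. Let $k_1,\dots,k_{M+1}\in\mathbb C$ be arbitrary and $$K=\mathbf C^2-\sum_{i=1}^{L+1}\alpha_i\{\mathbf A^i,\mathbf B\}-\beta\sum_{i=1}^{L}\omega_i\{\mathbf A^i,\mathbf B\}-\beta\{\mathbf A,\mathbf B^2\}+\sum_{i=1}^{M+1}k_i\mathbf A^i-(2\epsilon+\beta\eta)\mathbf B+(\beta^2-\delta)\mathbf B^2 .$$ Then $K=\kappa(N)$, where $$\begin{aligned}\kappa(n)={}&-(\Delta A(n-1))^2\rho(n-1)^2\Phi(n)-(\Delta A(n))^2\rho(n)^2\Phi(n+1)-2\sum_{i=1}^{L+1}\alpha_iA(n)^ih(n)-2\beta\sum_{i=1}^{L}\omega_iA(n)^ih(n)\\&-2\beta A(n)h(n)^2-2\beta A(n)\big(\rho(n-1)^2\Phi(n)+\rho(n)^2\P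hi(n+1)\big)+\sum_{i=1}^{M+1}k_iA(n)^i-(2\epsilon+\beta\eta)h(n)\\&+(\beta^2-\delta)\big(h(n)^2+\rho(n-1)^2\Phi(n)+\rho(n)^2\Phi(n+1)\big).\end{aligned}$$
   Context: Setting: $M\ge1$, $L=\lfloor M/2\rfloor$, complex constants $\alpha_1,\dots,\alpha_{L+1},\beta,\delta,\epsilon,\eta,\omega_1,\dots,\omega_L$. $\mathcal A$ is a unital associative algebra over $\mathbb C$ with elements $b,b^\dagger$ and a unital algebra homomorphism $f\mapsto f(N)$ from functions $\mathbb Z\to\mathbb C$ into $\mathcal A$ with $f(N)b^\dagger=b^\dagger f(N+1)$, $f(N)b=bf(N-1)$, $b^\dagger b=\Phi(N)$, $bb^\dagger=\Phi(N+1)$. $\Delta A(n)=A(n+1)-A(n)$, $\mathbf A=A(N)$, $\mathbf B=h(N)+b^\dagger\rho(N)+\rho(N)b$, $\mathbf C=b^\dagger\Delta A(N)\rho(N)-\rho(N)\Delta A(N)b$. $[X,Y]=XY-YX$, $\{X,Y\}=XY+YX$. The function $h$ is the paper's $b(N)$. *)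

theory Defs
  imports Complex_Main
begin

definition acomm :: "'a::ring \<Rightarrow> 'a \<Rightarrow> 'a" where
  "acomm X Y = X * Y + Y * X"

definition fdiff :: "(int \<Rightarrow> complex) \<Rightarrow> int \<Rightarrow> complex" where
  "fdiff A n = A (n + 1) - A n"

text \<open>A unital algebra homomorphism from functions on the integers (pointwise
  operations) into the algebra; complex scalars act through constant functions,
  which are required to be central.\<close>
definition calc_hom :: "((int \<Rightarrow> complex) \<Rightarrow> 'a::ring_1) \<Rightarrow> bool" where
  "calc_hom F \<longleftrightarrow>
     (\<forall>f g. F (\<lambda>n. f n + g n) = F f + F g) \<and>
     (\<forall>f g. F (\<lambda>n. f n * g n) = F f * F g) \<and>
     F (\<lambda>n. 1) = 1 \<and>
     (\<forall>c x. F (\<lambda>n. c) * x = x * F (\<lambda>n. c))"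

end

theory Submission
  imports Defs
begin

text \<open>Since \<open>B\<close> and \<open>C\<close> are linear in \<open>b\<close> and \<open>b\<^sup>\<dagger>\<close>, every term of \<open>K\<close> can be
  normal ordered, using the commutation rules, into \<open>b\<^sup>\<dagger>\<^sup>2 g\<^sub>2(N) + b\<^sup>\<dagger> g\<^sub>1(N) + g\<^sub>0(N) + h\<^sub>1(N) b + h\<^sub>2(N) b\<^sup>2\<close>.
  Computing the five coefficient functions of \<open>K\<close>, the coefficients of \<open>b\<^sup>\<dagger>\<^sup>2\<close> and \<open>b\<^sup>2\<close> are
  \<open>\<rho>(n)\<rho>(n+1)\<close> times \<open>\<Delta>A(n+1)\<Delta>A(n) - \<beta>(A(n) + A(n+2)) + \<beta>\<^sup>2 - \<delta>\<close>, which vanishes by (q1)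
  and (q3); the coefficients of \<open>b\<^sup>\<dagger>\<close> and \<open>b\<close> are \<open>-\<rho>(n)\<close> times an expression that vanishes
  by (q2) at \<open>n\<close> and \<open>n+1\<close> together with (q4); what is left is the diagonal term \<open>\<kappa>(N)\<close>.\<close>

lemma b_square_coefficient_eq_0:
  fixes A :: "int \<Rightarrow> complex"
  assumes "fdiff A n ^ 2 = \<delta> + \<beta> * (A n + A (n + 1))"
    and "fdiff A n - fdiff A (n + 1) = - \<beta>"
  shows "fdiff A (n + 1) * fdiff A n - \<beta> * A (n + 2) - \<beta> * A n + (\<beta> ^ 2 - \<delta>) = 0"
proof -
  have "A (n + 2) = A (n + 1) + fdiff A (n + 1)"
    by (simp add: fdiff_def add.assoc)
  with assms show ?thesis
    by (simp add: fdiff_def) algebra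
qed

lemma b_coefficient_eq_0:
  fixes A h p w :: "int \<Rightarrow> complex"
  assumes "\<And>m. p m + \<delta> * h m + \<epsilon> + 2 * \<beta> * A m * h m = 0"
    and "fdiff A n * (h (n + 1) - h n) = - \<beta> * (h (n + 1) + h n) + w (n + 1) + w n + \<eta>"
  shows "p (n + 1) + \<beta> * w (n + 1) + (p n + \<beta> * w n)
    + (\<beta> * A (n + 1) + \<beta> * A n - (\<beta> ^ 2 - \<delta>)) * (h n + h (n + 1)) + (2 * \<epsilon> + \<beta> * \<eta>) = 0"
  using assms(1)[of n] assms(1)[of "n + 1"] assms(2) unfolding fdiff_def by algebra

locale deformed_oscillator =
  fixes F :: "(int \<Rightarrow> complex) \<Rightarrow> 'a::ring_1" and b bd :: 'a and \<Phi> :: "int \<Rightarrow> complex"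
  assumes hom: "calc_hom F"
    and F_mult_bd: "\<And>f. F f * bd = bd * F (\<lambda>n. f (n + 1))"
    and F_mult_b: "\<And>f. F f * b = b * F (\<lambda>n. f (n - 1))"
    and bd_mult_b: "bd * b = F \<Phi>"
    and b_mult_bd: "b * bd = F (\<lambda>n. \<Phi> (n + 1))"
begin

lemma F_add: "F (\<lambda>n. f n + g n) = F f + F g"
  using hom unfolding calc_hom_def by blast

lemma F_mult: "F (\<lambda>n. f n * g n) = F f * F g"
  using hom unfolding calc_hom_def by blast

lemma F_1: "F (\<lambda>n. 1) = 1"
  using hom unfolding calc_hom_def by blast

lemma F_const_commute: "F (\<lambda>n. c) * x = x * F (\<lambda>n. c)"
  using hom unfolding calc_hom_def by blast

lemma F_0: "F (\<lambda>n. 0) = 0"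
  using F_add[of "\<lambda>n. 0" "\<lambda>n. 0"] by simp

lemma F_minus: "F (\<lambda>n. - f n) = - F f"
  using F_add[of "\<lambda>n. - f n" f] by (simp add: F_0 eq_neg_iff_add_eq_0)

lemma F_diff: "F (\<lambda>n. f n - g n) = F f - F g"
  using F_add[of f "\<lambda>n. - g n"] by (simp add: F_minus)

lemma F_sum: "F (\<lambda>n. \<Sum>i\<in>I. f i n) = (\<Sum>i\<in>I. F (f i))"
  by (induction I rule: infinite_finite_induct) (simp_all add: F_0 F_add)

lemma F_power: "F (\<lambda>n. f n ^ i) = F f ^ i"
  by (induction i) (simp_all add: F_1 F_mult)

lemma b_mult_F: "b * F g = F (\<lambda>n. g (n + 1)) * b"
  using F_mult_b[of "\<lambda>n. g (n + 1)"] by simp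

definition normal_ordered where
  "normal_ordered g2 g1 g0 h1 h2 = bd * bd * F g2 + bd * F g1 + F g0 + F h1 * b + F h2 * b * b"

lemma normal_ordered_F: "normal_ordered (\<lambda>n. 0) (\<lambda>n. 0) g (\<lambda>n. 0) (\<lambda>n. 0) = F g"
  by (simp add: normal_ordered_def F_0)

lemma normal_ordered_add:
  "normal_ordered g2 g1 g0 h1 h2 + normal_ordered g2' g1' g0' h1' h2' =
   normal_ordered (\<lambda>n. g2 n + g2' n) (\<lambda>n. g1 n + g1' n) (\<lambda>n. g0 n + g0' n)
     (\<lambda>n. h1 n + h1' n) (\<lambda>n. h2 n + h2' n)"
  by (simp add: normal_ordered_def F_add algebra_simps)

lemma normal_ordered_diff:
  "normal_ordered g2 g1 g0 h1 h2 - normal_ordered g2' g1' g0' h1' h2' =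
   normal_ordered (\<lambda>n. g2 n - g2' n) (\<lambda>n. g1 n - g1' n) (\<lambda>n. g0 n - g0' n)
     (\<lambda>n. h1 n - h1' n) (\<lambda>n. h2 n - h2' n)"
  by (simp add: normal_ordered_def F_diff algebra_simps)

lemma F_mult_normal_ordered:
  "F a * normal_ordered g2 g1 g0 h1 h2 =
   normal_ordered (\<lambda>n. a (n + 2) * g2 n) (\<lambda>n. a (n + 1) * g1 n) (\<lambda>n. a n * g0 n)
     (\<lambda>n. a n * h1 n) (\<lambda>n. a n * h2 n)"
proof -
  have "F a * bd * bd = bd * bd * F (\<lambda>n. a (n + 2))"
    by (simp add: F_mult_bd add.assoc mult.assoc)
  then show ?thesis
    unfolding normal_ordered_def
    by (simp add: distrib_left mult.assoc[symmetric] F_mult_bd)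
       (simp add: mult.assoc F_mult)
qed

lemma normal_ordered_mult_F:
  "normal_ordered g2 g1 g0 h1 h2 * F a =
   normal_ordered (\<lambda>n. g2 n * a n) (\<lambda>n. g1 n * a n) (\<lambda>n. g0 n * a n)
     (\<lambda>n. h1 n * a (n + 1)) (\<lambda>n. h2 n * a (n + 2))"
proof -
  have "b * (F (\<lambda>n. a (n + 1)) * b) = F (\<lambda>n. a (n + 2)) * (b * b)"
    by (simp add: b_mult_F add.assoc flip: mult.assoc)
  then show ?thesis
    unfolding normal_ordered_def
    by (simp add: distrib_right mult.assoc b_mult_F)
       (simp add: mult.assoc[symmetric] F_mult)
qed

lemma normal_ordered_mult_bd:
  "normal_ordered (\<lambda>n. 0) g1 g0 h1 (\<lambda>n. 0) * bd =
   normal_ordered (\<lambda>n. g1 (n + 1)) (\<lambda>n. g0 (n + 1)) (\<lambda>n. h1 n * \<Phi> (n + 1)) (\<lambda>n. 0) (\<lambda>n. 0)"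
  unfolding normal_ordered_def
  by (simp add: F_0 distrib_right mult.assoc F_mult_bd b_mult_bd F_mult)

lemma normal_ordered_mult_b:
  "normal_ordered (\<lambda>n. 0) g1 g0 h1 (\<lambda>n. 0) * b =
   normal_ordered (\<lambda>n. 0) (\<lambda>n. 0) (\<lambda>n. \<Phi> n * g1 (n - 1)) g0 h1"
  unfolding normal_ordered_def
  by (simp add: F_0 distrib_right mult.assoc F_mult_b F_mult flip: bd_mult_b)

lemma normal_ordered_mult:
  "normal_ordered (\<lambda>n. 0) g1 g0 h1 (\<lambda>n. 0) * normal_ordered (\<lambda>n. 0) g1' g0' h1' (\<lambda>n. 0) =
   normal_ordered (\<lambda>n. g1 (n + 1) * g1' n) (\<lambda>n. g1 n * g0' n + g0 (n + 1) * g1' n)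
     (\<lambda>n. \<Phi> n * g1 (n - 1) * h1' (n - 1) + g0 n * g0' n + h1 n * \<Phi> (n + 1) * g1' n)
     (\<lambda>n. g0 n * h1' n + h1 n * g0' (n + 1)) (\<lambda>n. h1 n * h1' (n + 1))"
proof -
  let ?X = "normal_ordered (\<lambda>n. 0) g1 g0 h1 (\<lambda>n. 0)"
  have "normal_ordered (\<lambda>n. 0) g1' g0' h1' (\<lambda>n. 0) = bd * F g1' + F g0' + b * F (\<lambda>n. h1' (n - 1))"
    by (simp add: normal_ordered_def F_0 b_mult_F)
  then have "?X * normal_ordered (\<lambda>n. 0) g1' g0' h1' (\<lambda>n. 0) =
      ?X * bd * F g1' + ?X * F g0' + ?X * b * F (\<lambda>n. h1' (n - 1))"
    by (simp add: distrib_left mult.assoc)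
  also have "\<dots> = normal_ordered (\<lambda>n. g1 (n + 1) * g1' n) (\<lambda>n. g1 n * g0' n + g0 (n + 1) * g1' n)
     (\<lambda>n. \<Phi> n * g1 (n - 1) * h1' (n - 1) + g0 n * g0' n + h1 n * \<Phi> (n + 1) * g1' n)
     (\<lambda>n. g0 n * h1' n + h1 n * g0' (n + 1)) (\<lambda>n. h1 n * h1' (n + 1))"
    unfolding normal_ordered_mult_bd normal_ordered_mult_b normal_ordered_mult_F normal_ordered_add
    by (simp add: algebra_simps)
  finally show ?thesis .
qed

lemma acomm_F_normal_ordered:
  "acomm (F a) (normal_ordered g2 g1 g0 h1 h2) =
   normal_ordered (\<lambda>n. (a (n + 2) + a n) * g2 n) (\<lambda>n. (a (n + 1) + a n) * g1 n)
     (\<lambda>n. 2 * a n * g0 n) (\<lambda>n. (a n + a (n + 1)) * h1 n) (\<lambda>n. (a n + a (n + 2)) * h2 n)"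
  unfolding acomm_def F_mult_normal_ordered normal_ordered_mult_F normal_ordered_add
  by (simp add: algebra_simps)

lemma F_const_mult_acomm: "F (\<lambda>n. c) * acomm (F f) X = acomm (F (\<lambda>n. c * f n)) X"
proof -
  have "F (\<lambda>n. c) * X * F f = X * F (\<lambda>n. c * f n)"
    by (simp add: F_const_commute F_mult mult.assoc)
  then show ?thesis
    by (simp add: acomm_def distrib_left flip: mult.assoc F_mult)
qed

lemma sum_F_const_mult_acomm:
  "(\<Sum>i\<in>I. F (\<lambda>n. c i) * acomm (F f ^ i) X) = acomm (F (\<lambda>n. \<Sum>i\<in>I. c i * f n ^ i)) X"
proof -
  have "(\<Sum>i\<in>I. F (\<lambda>n. c i) * acomm (F f ^ i) X) = (\<Sum>i\<in>I. acomm (F (\<lambda>n. c i * f n ^ i)) X)"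
    by (simp add: F_const_mult_acomm flip: F_power)
  then show ?thesis
    by (simp add: acomm_def sum.distrib sum_distrib_left sum_distrib_right F_sum)
qed

lemma sum_F_const_mult_power:
  "(\<Sum>i\<in>I. F (\<lambda>n. c i) * F f ^ i) = F (\<lambda>n. \<Sum>i\<in>I. c i * f n ^ i)"
  by (simp add: F_sum F_mult F_power)

lemma casimir_normal_ordered:
  fixes A h \<rho> P Q R S T :: "int \<Rightarrow> complex"
  defines "B \<equiv> F h + bd * F \<rho> + F \<rho> * b"
    and "C \<equiv> bd * F (fdiff A) * F \<rho> - F \<rho> * F (fdiff A) * b"
    and "W \<equiv> \<lambda>n. \<rho> (n - 1) ^ 2 * \<Phi> n + h n ^ 2 + \<rho> n ^ 2 * \<Phi> (n + 1)"
  shows "C ^ 2 - acomm (F P) B - acomm (F Q) (B ^ 2) + F R - F S * B + F T * B ^ 2 =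
    normal_ordered
      (\<lambda>n. \<rho> (n + 1) * \<rho> n * (fdiff A (n + 1) * fdiff A n - Q (n + 2) - Q n + T (n + 2)))
      (\<lambda>n. - \<rho> n * (P (n + 1) + P n + (Q (n + 1) + Q n - T (n + 1)) * (h n + h (n + 1)) + S (n + 1)))
      (\<lambda>n. - (fdiff A (n - 1) ^ 2 * \<rho> (n - 1) ^ 2 * \<Phi> n) - fdiff A n ^ 2 * \<rho> n ^ 2 * \<Phi> (n + 1)
           - 2 * P n * h n - 2 * Q n * W n + R n - S n * h n + T n * W n)
      (\<lambda>n. - \<rho> n * (P (n + 1) + P n + (Q (n + 1) + Q n - T n) * (h n + h (n + 1)) + S n))
      (\<lambda>n. \<rho> n * \<rho> (n + 1) * (fdiff A (n + 1) * fdiff A n - Q (n + 2) - Q n + T n))"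
proof -
  have B: "B = normal_ordered (\<lambda>n. 0) \<rho> h \<rho> (\<lambda>n. 0)"
    by (simp add: B_def normal_ordered_def F_0)
  have C: "C = normal_ordered (\<lambda>n. 0) (\<lambda>n. fdiff A n * \<rho> n) (\<lambda>n. 0)
                 (\<lambda>n. - (\<rho> n * fdiff A n)) (\<lambda>n. 0)"
    by (simp add: C_def normal_ordered_def F_0 F_minus mult.assoc flip: F_mult)
  show ?thesis
    unfolding B C power2_eq_square normal_ordered_mult acomm_F_normal_ordered
      F_mult_normal_ordered normal_ordered_F[symmetric, of R] normal_ordered_add normal_ordered_diff
    by (simp add: W_def algebra_simps power2_eq_square)
qed

end

theorem proposition8:
  fixes M :: nat and L :: nat
    and \<alpha> \<omega> k :: "nat \<Rightarrow> complex"
    and \<beta> \<delta> \<epsilon> \<eta> :: complex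
    and F :: "(int \<Rightarrow> complex) \<Rightarrow> 'a::ring_1"
    and b bd AA BB CC K :: 'a
    and \<Phi> A h \<rho> :: "int \<Rightarrow> complex"
  assumes M1: "M \<ge> 1" and Ldef: "L = M div 2"
    and hom: "calc_hom F"
    and comm_bd: "\<And>f. F f * bd = bd * F (\<lambda>n. f (n + 1))"
    and comm_b: "\<And>f. F f * b = b * F (\<lambda>n. f (n - 1))"
    and bdb: "bd * b = F \<Phi>"
    and bbd: "b * bd = F (\<lambda>n. \<Phi> (n + 1))"
    and q1: "\<And>n. (fdiff A n) ^ 2 = \<delta> + \<beta> * (A n + A (n + 1))"
    and q2: "\<And>n. (\<Sum>i=1..L+1. \<alpha> i * A n ^ i) + \<delta> * h n + \<epsilon> + 2 * \<beta> * A n * h n = 0"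
    and q3: "\<And>n. fdiff A n - fdiff A (n + 1) = - \<beta>"
    and q4: "\<And>n. fdiff A n * (h (n + 1) - h n)
               = - \<beta> * (h (n + 1) + h n) + (\<Sum>i=1..L. \<omega> i * (A (n + 1) ^ i + A n ^ i)) + \<eta>"
    and AAdef: "AA = F A"
    and BBdef: "BB = F h + bd * F \<rho> + F \<rho> * b"
    and CCdef: "CC = bd * F (fdiff A) * F \<rho> - F \<rho> * F (fdiff A) * b"
    and Kdef: "K = CC ^ 2
          - (\<Sum>i=1..L+1. F (\<lambda>n. \<alpha> i) * acomm (AA ^ i) BB)
          - F (\<lambda>n. \<beta>) * (\<Sum>i=1..L. F (\<lambda>n. \<omega> i) * acomm (AA ^ i) BB)
          - F (\<lambda>n. \<beta>) * acomm AA (BB ^ 2)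
          + (\<Sum>i=1..M+1. F (\<lambda>n. k i) * AA ^ i)
          - F (\<lambda>n. 2 * \<epsilon> + \<beta> * \<eta>) * BB
          + F (\<lambda>n. \<beta> ^ 2 - \<delta>) * BB ^ 2"
  defines "\<kappa> \<equiv> \<lambda>n.
            0 - (fdiff A (n - 1)) ^ 2 * \<rho> (n - 1) ^ 2 * \<Phi> n
            - (fdiff A n) ^ 2 * \<rho> n ^ 2 * \<Phi> (n + 1)
            - 2 * (\<Sum>i=1..L+1. \<alpha> i * A n ^ i * h n)
            - 2 * \<beta> * (\<Sum>i=1..L. \<omega> i * A n ^ i * h n)
            - 2 * \<beta> * A n * (h n) ^ 2
            - 2 * \<beta> * A n * (\<rho> (n - 1) ^ 2 * \<Phi> n + \<rho> n ^ 2 * \<Phi> (n + 1))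
            + (\<Sum>i=1..M+1. k i * A n ^ i)
            - (2 * \<epsilon> + \<beta> * \<eta>) * h n
            + (\<beta> ^ 2 - \<delta>) * ((h n) ^ 2 + \<rho> (n - 1) ^ 2 * \<Phi> n + \<rho> n ^ 2 * \<Phi> (n + 1))"
  shows "K = F \<kappa>"
proof -
  \<comment> \<open>\<open>M1\<close> and \<open>Ldef\<close> only fix the index ranges; the identity holds for all \<open>L\<close> and \<open>M\<close>.\<close>
  interpret deformed_oscillator F b bd \<Phi>
    using hom comm_bd comm_b bdb bbd by unfold_locales
  define p w where "p n = (\<Sum>i=1..L+1. \<alpha> i * A n ^ i)" and "w n = (\<Sum>i=1..L. \<omega> i * A n ^ i)"
    for n
  have b_square_coeff: "fdiff A (n + 1) * fdiff A n - \<beta> * A (n + 2) - \<beta> * A n + (\<beta> ^ 2 - \<delta>) = 0" for n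
    using q1 q3 by (rule b_square_coefficient_eq_0)
  have b_coeff: "p (n + 1) + \<beta> * w (n + 1) + (p n + \<beta> * w n)
    + (\<beta> * A (n + 1) + \<beta> * A n - (\<beta> ^ 2 - \<delta>)) * (h n + h (n + 1)) + (2 * \<epsilon> + \<beta> * \<eta>) = 0" for n
    using q2 q4[of n] unfolding p_def w_def
    by (intro b_coefficient_eq_0) (simp_all add: distrib_left sum.distrib)
  have "K = CC ^ 2 - acomm (F (\<lambda>n. p n + \<beta> * w n)) BB - acomm (F (\<lambda>n. \<beta> * A n)) (BB ^ 2)
      + F (\<lambda>n. \<Sum>i=1..M+1. k i * A n ^ i) - F (\<lambda>n. 2 * \<epsilon> + \<beta> * \<eta>) * BB + F (\<lambda>n. \<beta> ^ 2 - \<delta>) * BB ^ 2"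
    unfolding Kdef AAdef sum_F_const_mult_acomm sum_F_const_mult_power F_const_mult_acomm p_def w_def
    by (simp add: F_add acomm_def algebra_simps)
  also have "\<dots> = F \<kappa>"
    unfolding BBdef CCdef casimir_normal_ordered b_square_coeff b_coeff mult_zero_right
      minus_zero normal_ordered_F
    by (rule arg_cong[where f = F])
       (simp add: fun_eq_iff \<kappa>_def p_def w_def sum_distrib_left algebra_simps)
  finally show ?thesis .
qed

end
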